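(* Let ${\bf r}=(r_0,r_1,\dots)$ be a finitely supported sequence of nonnegative integers with $n=\sum_{d\ge1}r_d\ge1$ and $\ell=-\sum_{d\ge0}(d-1)r_d\ge1$, and let $k\ge0$ be an integer. Then $$|\mathcal{CF}_{{\bf r},k}|=\binom{n}{r_1,r_2,\dots}\,\ell\,1^{r_1}2^{r_2}3^{r_3}\cdots\prod_{i=1}^{n-1}\big(r_0+i(1+k)\big).$$
   Context: A plane tree is an unlabelled rooted tree in which the children of every vertex are linearly ordered; a plane forest is a finite linearly ordered sequence of plane trees. For vertices $u,v$ in a tree, $v$ is a descendant of $u$ if $u$ lies on the path from the root to $v$ (so $u$ is a descendant of itself). The degree $d_v$ is the number of children of $v$; $v$ is internal if $d_v\ge1$. $I(F)$ is the set of internal vertices of $F$. A plane forest has type ${\bf r}$ if it has exactly $r_i$ vertices of degree $i$ for all $i\ge0$. A labelled forest is a plane forest $F$ together with a bijection (labelling) $I(F)\to[n]$. An internal vertex $v$ of a labelled forest is proper if no internal descendant of $v$ has a smaller label than $v$, and improper otherwise. Fix colors $c_1,c_2,\dots$ and distinct special colors $c_1',c_2',\dots$. A proper $k$-coloring of a labelled forest assigns to each internal vertex $v$ a color, taken from $\{c_1,\dots,c_{d_v}\}$ if $v$ is proper and from $\{c_1,\dots,c_{d_v}\}\cup\{c_1',\dots,c_k'\}$ if $v$ is improper. A $k$-colored labelled forest is a labelled forest together with a proper $k$-coloring; $\mathcal{CF}_{{\bf r},k}$ is the set of $k$-colored labelled forests whose underlying plane forest has type ${\bf r}$. *)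

theory Defs
  imports Main
begin

datatype ptree = Node "ptree list"

fun children :: "ptree \<Rightarrow> ptree list" where
  "children (Node ts) = ts"

fun subtree :: "ptree \<Rightarrow> nat list \<Rightarrow> ptree option" where
  "subtree t [] = Some t"
| "subtree (Node ts) (i # p) = (if i < length ts then subtree (ts ! i) p else None)"

text \<open>A plane forest is a list of plane trees. Its vertices are addressed by
  nonempty paths: the first index selects the tree, the rest descend.\<close>
type_synonym pforest = "ptree list"

definition fverts :: "pforest \<Rightarrow> nat list set" where
  "fverts F = {p. p \<noteq> [] \<and> subtree (Node F) p \<noteq> None}"

definition fdeg :: "pforest \<Rightarrow> nat list \<Rightarrow> nat" where
  "fdeg F p = length (children (the (subtree (Node F) p)))"

definition internal :: "pforest \<Rightarrow> nat list set" where
  "internal F = {v \<in> fverts F. fdeg F v \<ge> 1}"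

definition descendant :: "nat list \<Rightarrow> nat list \<Rightarrow> bool" where
  "descendant v u \<longleftrightarrow> (\<exists>w. v = u @ w)"

definition has_type :: "pforest \<Rightarrow> (nat \<Rightarrow> nat) \<Rightarrow> bool" where
  "has_type F r \<longleftrightarrow> (\<forall>i. card {v \<in> fverts F. fdeg F v = i} = r i)"

text \<open>Labelling: bijection from the internal vertices onto [n], n = |I(F)|;
  normalised to 0 outside I(F) so that labellings are determined by their values on I(F).\<close>
definition is_labelling :: "pforest \<Rightarrow> (nat list \<Rightarrow> nat) \<Rightarrow> bool" where
  "is_labelling F lab \<longleftrightarrow> bij_betw lab (internal F) {1..card (internal F)}
     \<and> (\<forall>v. v \<notin> internal F \<longrightarrow> lab v = 0)"

definition proper_vertex :: "pforest \<Rightarrow> (nat list \<Rightarrow> nat) \<Rightarrow> nat list \<Rightarrow> bool" where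
  "proper_vertex F lab v \<longleftrightarrow>
     (\<forall>w \<in> internal F. descendant w v \<longrightarrow> \<not> lab w < lab v)"

text \<open>Colors: Col j is c_j, Spec j is the special color c_j'.\<close>
datatype color = Col nat | Spec nat

definition allowed_colors :: "pforest \<Rightarrow> (nat list \<Rightarrow> nat) \<Rightarrow> nat \<Rightarrow> nat list \<Rightarrow> color set" where
  "allowed_colors F lab k v =
     {Col j | j. 1 \<le> j \<and> j \<le> fdeg F v} \<union>
     (if proper_vertex F lab v then {} else {Spec j | j. 1 \<le> j \<and> j \<le> k})"

definition is_proper_coloring ::
  "pforest \<Rightarrow> (nat list \<Rightarrow> nat) \<Rightarrow> nat \<Rightarrow> (nat list \<Rightarrow> color) \<Rightarrow> bool" where
  "is_proper_coloring F lab k col \<longleftrightarrow>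
     (\<forall>v \<in> internal F. col v \<in> allowed_colors F lab k v)
     \<and> (\<forall>v. v \<notin> internal F \<longrightarrow> col v = Col 0)"

definition CF :: "(nat \<Rightarrow> nat) \<Rightarrow> nat \<Rightarrow>
    (pforest \<times> (nat list \<Rightarrow> nat) \<times> (nat list \<Rightarrow> color)) set" where
  "CF r k = {(F, lab, col). has_type F r \<and> is_labelling F lab \<and> is_proper_coloring F lab k col}"

definition multinomial :: "nat \<Rightarrow> nat set \<Rightarrow> (nat \<Rightarrow> nat) \<Rightarrow> nat" where
  "multinomial n S r = fact n div (\<Prod>d\<in>S. fact (r d))"

end

theory Submission
  imports Defs "HOL-Library.FuncSet"
begin

text \<open>Weight each labelled forest by its number of proper colorings, a product over the internal
  vertices of \<open>d\<^sub>v\<close>, or \<open>d\<^sub>v + k\<close> for improper ones, and let labels range over an arbitrary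
  finite set \<open>S\<close>. Rotating the \<open>\<ell>\<close> trees cyclically shows that the total weight is \<open>\<ell>\<close> times the
  weight \<open>U\<close> of the forests whose smallest label lies in the first tree. Deleting the root of
  that tree, of degree \<open>d\<close> and label \<open>a\<close>, leaves a forest of the type with one vertex of degree
  \<open>d\<close> removed and \<open>\<ell> + d - 1\<close> trees. The root is proper iff \<open>a = min S\<close>: then it contributes
  \<open>d\<close> and the smallest remaining label may lie in any tree; otherwise it contributes \<open>d + k\<close> and
  the smallest label lies in one of its \<open>d\<close> subtrees. The resulting recursion for \<open>U\<close> is solved
  by the closed formula by induction on the number of internal vertices.\<close>

lemma fverts_Nil [simp]: "fverts [] = {}"
  unfolding fverts_def by (auto simp: neq_Nil_conv)

lemma Nil_notin_fverts: "q \<in> fverts F \<Longrightarrow> q \<noteq> []"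
  unfolding fverts_def by auto

lemma internal_subset_fverts: "internal F \<subseteq> fverts F"
  unfolding internal_def by auto

lemma Nil_notin_internal: "v \<in> internal F \<Longrightarrow> v \<noteq> []"
  using Nil_notin_fverts internal_subset_fverts by blast

lemma hd_fverts_less_length: "v \<in> fverts F \<Longrightarrow> hd v < length F"
  unfolding fverts_def by (cases v) (auto split: if_splits)

lemma descendant_Cons_Cons: "descendant (j # p') (i # p) \<longleftrightarrow> j = i \<and> descendant p' p"
  unfolding descendant_def by auto

section \<open>Joining the first trees of a forest under a new root\<close>

text \<open>The forest \<open>Node ts # F'\<close> arises from \<open>ts @ F'\<close> by hanging its first \<open>length ts\<close>
  trees below a new root \<open>[0]\<close>; \<open>join_path (length ts)\<close> maps the addresses of \<open>ts @ F'\<close>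
  to the corresponding addresses of \<open>Node ts # F'\<close>.\<close>

fun join_path :: "nat \<Rightarrow> nat list \<Rightarrow> nat list" where
  "join_path d [] = []"
| "join_path d (i # p) = (if i < d then 0 # i # p else Suc (i - d) # p)"

fun split_path :: "nat \<Rightarrow> nat list \<Rightarrow> nat list" where
  "split_path d [] = []"
| "split_path d (0 # p) = p"
| "split_path d (Suc j # p) = (j + d) # p"

lemma split_join_path: "q \<noteq> [] \<Longrightarrow> split_path d (join_path d q) = q"
  by (cases q) auto

lemma join_path_not_Nil: "q \<noteq> [] \<Longrightarrow> join_path d q \<noteq> []"
  by (cases q) auto

lemma join_path_neq_root: "join_path d q \<noteq> [0]"
  by (cases q) auto

lemma root_notin_join_path_image: "[0] \<notin> join_path d ` A"
  using join_path_neq_root by (metis imageE)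

lemma inj_on_join_path: "inj_on (join_path d) (fverts F)"
  by (rule inj_onI) (metis split_join_path Nil_notin_fverts)

lemma subtree_join_path:
  "q \<noteq> [] \<Longrightarrow> subtree (Node (Node ts # F')) (join_path (length ts) q) = subtree (Node (ts @ F')) q"
  by (cases q) (auto simp: nth_append)

lemma fverts_join:
  "fverts (Node ts # F') = insert [0] (join_path (length ts) ` fverts (ts @ F'))"
proof (intro equalityI subsetI)
  fix q assume q: "q \<in> fverts (Node ts # F')"
  then obtain i p where qip: "q = i # p" using Nil_notin_fverts by (cases q) auto
  have sq: "subtree (Node (Node ts # F')) q \<noteq> None" using q unfolding fverts_def by auto
  show "q \<in> insert [0] (join_path (length ts) ` fverts (ts @ F'))"
  proof (cases i)
    case 0
    show ?thesis
    proof (cases p)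
      case (Cons j p')
      with sq qip 0 have "j < length ts" by (auto split: if_splits)
      with sq have "j # p' \<in> fverts (ts @ F')" and "q = join_path (length ts) (j # p')"
        unfolding fverts_def qip 0 Cons by (simp_all add: nth_append)
      then show ?thesis by blast
    qed (simp add: qip 0)
  next
    case (Suc j)
    with sq qip have "j < length F'" by (auto split: if_splits)
    with sq have "(j + length ts) # p \<in> fverts (ts @ F')"
      and "q = join_path (length ts) ((j + length ts) # p)"
      unfolding fverts_def qip Suc by (simp_all add: nth_append)
    then show ?thesis by blast
  qed
next
  fix q assume "q \<in> insert [0] (join_path (length ts) ` fverts (ts @ F'))"
  then show "q \<in> fverts (Node ts # F')"
    by (auto simp: fverts_def subtree_join_path join_path_not_Nil)
qed

lemma fdeg_join_path:
  "q \<noteq> [] \<Longrightarrow> fdeg (Node ts # F') (join_path (length ts) q) = fdeg (ts @ F') q"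
  unfolding fdeg_def using subtree_join_path by simp

lemma fdeg_join_root: "fdeg (Node ts # F') [0] = length ts"
  unfolding fdeg_def by simp

lemma internal_join:
  assumes "ts \<noteq> []"
  shows "internal (Node ts # F') = insert [0] (join_path (length ts) ` internal (ts @ F'))"
proof -
  have "internal (Node ts # F')
      = insert [0] {v \<in> join_path (length ts) ` fverts (ts @ F'). 1 \<le> fdeg (Node ts # F') v}"
    using assms by (auto simp: internal_def fverts_join fdeg_join_root Suc_le_eq)
  also have "{v \<in> join_path (length ts) ` fverts (ts @ F'). 1 \<le> fdeg (Node ts # F') v}
      = join_path (length ts) ` internal (ts @ F')"
    unfolding internal_def by (force simp: fdeg_join_path dest: Nil_notin_fverts)
  finally show ?thesis .
qed

lemma descendant_join_path:
  "v \<noteq> [] \<Longrightarrow> w \<noteq> [] \<Longrightarrow> descendant (join_path d w) (join_path d v) \<longleftrightarrow> descendant w v"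
  by (cases v; cases w) (auto simp: descendant_Cons_Cons)

lemma root_not_descendant_join_path: "v \<noteq> [] \<Longrightarrow> \<not> descendant [0] (join_path d v)"
  by (cases v) (auto simp: descendant_def)

lemma hd_join_path_eq_0: "w \<noteq> [] \<Longrightarrow> hd (join_path d w) = 0 \<longleftrightarrow> hd w < d"
  by (cases w) auto

lemma finite_fverts_and_length:
  "finite (fverts F) \<and> int (length F) = (\<Sum>v\<in>fverts F. 1 - int (fdeg F v))"
proof (induction "size_list size F" arbitrary: F rule: less_induct)
  case less
  show ?case
  proof (cases F)
    case (Cons T F')
    obtain ts where T: "T = Node ts" by (cases T)
    let ?G = "ts @ F'" and ?j = "join_path (length ts)"
    have IH: "finite (fverts ?G) \<and> int (length ?G) = (\<Sum>v\<in>fverts ?G. 1 - int (fdeg ?G v))"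
      using less[of ?G] Cons T by simp
    have "(\<Sum>v\<in>fverts F. 1 - int (fdeg F v))
        = (1 - int (length ts)) + (\<Sum>v\<in>?j ` fverts ?G. 1 - int (fdeg F v))"
      using IH by (simp add: Cons T fverts_join fdeg_join_root root_notin_join_path_image)
    also have "(\<Sum>v\<in>?j ` fverts ?G. 1 - int (fdeg F v)) = (\<Sum>v\<in>fverts ?G. 1 - int (fdeg ?G v))"
      using inj_on_join_path by (simp add: sum.reindex Cons T fdeg_join_path Nil_notin_fverts)
    finally show ?thesis using IH by (simp add: Cons T fverts_join)
  qed simp
qed

lemma finite_fverts [simp]: "finite (fverts F)"
  using finite_fverts_and_length by (rule conjunct1)

lemma finite_internal [simp]: "finite (internal F)"
  using internal_subset_fverts by (rule finite_subset) simp

lemma length_eq_sum_fverts: "int (length F) = (\<Sum>v\<in>fverts F. 1 - int (fdeg F v))"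
  using finite_fverts_and_length by (rule conjunct2)

lemma card_fverts_join: "card (fverts (Node ts # F')) = Suc (card (fverts (ts @ F')))"
  unfolding fverts_join
  by (simp add: card_image inj_on_join_path root_notin_join_path_image)

lemma length_le_card_fverts: "length F \<le> card (fverts F)"
proof -
  have "(\<lambda>i. [i]) ` {..<length F} \<subseteq> fverts F" unfolding fverts_def by auto
  then have "card ((\<lambda>i. [i]) ` {..<length F}) \<le> card (fverts F)"
    by (rule card_mono[OF finite_fverts])
  then show ?thesis by (subst (asm) card_image) (auto simp: inj_on_def)
qed

lemma finite_card_fverts_le: "finite {F. card (fverts F) \<le> M}"
proof (induction M)
  case 0
  have "F = []" if "card (fverts F) \<le> 0" for F
    using length_le_card_fverts[of F] that by simp
  then have "{F. card (fverts F) \<le> 0} \<subseteq> {[]}" by blast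
  then show ?case by (rule finite_subset) simp
next
  case (Suc M)
  let ?join = "\<lambda>(d, G). Node (take d G) # drop d G"
  have "{F. card (fverts F) \<le> Suc M} \<subseteq> insert [] (?join ` ({..M} \<times> {G. card (fverts G) \<le> M}))"
  proof
    fix F assume F: "F \<in> {F. card (fverts F) \<le> Suc M}"
    show "F \<in> insert [] (?join ` ({..M} \<times> {G. card (fverts G) \<le> M}))"
    proof (cases F)
      case (Cons T F')
      obtain ts where T: "T = Node ts" by (cases T)
      have c: "card (fverts (ts @ F')) \<le> M" using F card_fverts_join by (simp add: Cons T)
      moreover have "length ts \<le> M" using c length_le_card_fverts[of "ts @ F'"] by simp
      moreover have "F = ?join (length ts, ts @ F')" by (simp add: Cons T)
      ultimately show ?thesis by blast
    qed simp
  qed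
  moreover have "finite (insert [] (?join ` ({..M} \<times> {G. card (fverts G) \<le> M})))"
    using Suc by simp
  ultimately show ?case by (rule finite_subset)
qed

lemma card_deg_join:
  "card {v \<in> fverts (Node ts # F'). fdeg (Node ts # F') v = i} =
   card {v \<in> fverts (ts @ F'). fdeg (ts @ F') v = i} + (if i = length ts then 1 else 0)"
proof -
  let ?j = "join_path (length ts)" and ?X = "{v \<in> fverts (ts @ F'). fdeg (ts @ F') v = i}"
  have "{v \<in> fverts (Node ts # F'). fdeg (Node ts # F') v = i}
      = (if i = length ts then insert [0] (?j ` ?X) else ?j ` ?X)"
    by (force simp: fverts_join fdeg_join_root fdeg_join_path dest: Nil_notin_fverts)
  moreover have "card (?j ` ?X) = card ?X"
    using inj_on_join_path by (rule card_image[OF inj_on_subset]) auto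
  ultimately show ?thesis
    by (cases "i = length ts") (simp_all add: root_notin_join_path_image)
qed

lemma has_type_join:
  "has_type (Node ts # F') r \<longleftrightarrow>
     1 \<le> r (length ts) \<and> has_type (ts @ F') (r(length ts := r (length ts) - 1))"
proof -
  have "(\<forall>i. c i + (if i = d then 1 else 0) = r i) \<longleftrightarrow> 1 \<le> r d \<and> (\<forall>i. c i = (r(d := r d - 1)) i)"
    for c :: "nat \<Rightarrow> nat" and d
  proof
    assume h: "\<forall>i. c i + (if i = d then 1 else 0) = r i"
    show "1 \<le> r d \<and> (\<forall>i. c i = (r(d := r d - 1)) i)"
    proof (intro conjI allI)
      show "1 \<le> r d" using h[rule_format, of d] by simp
      show "c i = (r(d := r d - 1)) i" for i using h[rule_format, of i] by (cases "i = d") auto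
    qed
  next
    assume h: "1 \<le> r d \<and> (\<forall>i. c i = (r(d := r d - 1)) i)"
    show "\<forall>i. c i + (if i = d then 1 else 0) = r i"
    proof
      show "c i + (if i = d then 1 else 0) = r i" for i using h by (cases "i = d") auto
    qed
  qed
  then show ?thesis unfolding has_type_def card_deg_join .
qed

lemma has_type_deg_le:
  assumes "has_type F r" and "\<forall>i>N. r i = 0" and "v \<in> fverts F"
  shows "fdeg F v \<le> N"
proof (rule ccontr)
  assume "\<not> fdeg F v \<le> N"
  then have "card {w \<in> fverts F. fdeg F w = fdeg F v} = 0"
    using assms(1,2) unfolding has_type_def by simp
  then show False using assms(3) by auto
qed

lemma sum_fverts_of_type:
  assumes "has_type F r" and "\<forall>i>N. r i = 0"
  shows "(\<Sum>v\<in>fverts F. f (fdeg F v)) = (\<Sum>i\<le>N. of_nat (r i) * f i)"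
proof -
  define A where "A i = {v \<in> fverts F. fdeg F v = i}" for i
  have "fverts F = (\<Union>i\<le>N. A i)"
    using has_type_deg_le[OF assms] by (auto simp: A_def)
  then have "(\<Sum>v\<in>fverts F. f (fdeg F v)) = (\<Sum>v\<in>(\<Union>i\<le>N. A i). f (fdeg F v))"
    by (rule arg_cong)
  also have "\<dots> = (\<Sum>i\<le>N. \<Sum>v\<in>A i. f (fdeg F v))"
    by (rule sum.UNION_disjoint) (auto simp: A_def)
  also have "\<dots> = (\<Sum>i\<le>N. \<Sum>v\<in>A i. f i)"
    by (intro sum.cong refl) (simp add: A_def)
  also have "\<dots> = (\<Sum>i\<le>N. of_nat (r i) * f i)"
    using assms(1) by (simp add: A_def has_type_def)
  finally show ?thesis .
qed

lemma card_fverts_of_type: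
  assumes "has_type F r" and "\<forall>i>N. r i = 0"
  shows "card (fverts F) = (\<Sum>i\<le>N. r i)"
  using sum_fverts_of_type[OF assms, of "\<lambda>_. 1 :: nat"] by simp

lemma finite_forests_of_type:
  assumes "\<forall>i>N. r i = 0"
  shows "finite {F. has_type F r}"
  using card_fverts_of_type[OF _ assms]
  by (intro finite_subset[OF _ finite_card_fverts_le[of "\<Sum>i\<le>N. r i"]]) auto

definition n_internal :: "(nat \<Rightarrow> nat) \<Rightarrow> nat \<Rightarrow> nat" where
  "n_internal r N = (\<Sum>d=1..N. r d)"

definition n_trees :: "(nat \<Rightarrow> nat) \<Rightarrow> nat \<Rightarrow> int" where
  "n_trees r N = int (r 0) - (\<Sum>d=1..N. (int d - 1) * int (r d))"

definition fact_prod :: "(nat \<Rightarrow> nat) \<Rightarrow> nat \<Rightarrow> nat" where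
  "fact_prod r N = (\<Prod>d=1..N. fact (r d))"

definition deg_prod :: "(nat \<Rightarrow> nat) \<Rightarrow> nat \<Rightarrow> nat" where
  "deg_prod r N = (\<Prod>d=1..N. d ^ r d)"

definition leaf_prod :: "(nat \<Rightarrow> nat) \<Rightarrow> nat \<Rightarrow> nat \<Rightarrow> nat" where
  "leaf_prod r k n = (\<Prod>i=1..n - 1. r 0 + i * (1 + k))"

lemma length_of_type:
  assumes "has_type F r" and "\<forall>i>N. r i = 0"
  shows "int (length F) = n_trees r N"
proof -
  have "int (length F) = (\<Sum>i\<le>N. int (r i) * (1 - int i))"
    using length_eq_sum_fverts sum_fverts_of_type[OF assms, of "\<lambda>i. 1 - int i"] by simp
  also have "\<dots> = int (r 0) + (\<Sum>i=1..N. int (r i) * (1 - int i))"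
    by (simp add: atMost_atLeast0 sum.atLeast_Suc_atMost)
  also have "(\<Sum>i=1..N. int (r i) * (1 - int i)) = - (\<Sum>i=1..N. (int i - 1) * int (r i))"
    unfolding sum_negf[symmetric] by (intro sum.cong) (auto simp: algebra_simps)
  also have "int (r 0) + - (\<Sum>i=1..N. (int i - 1) * int (r i)) = n_trees r N"
    unfolding n_trees_def by simp
  finally show ?thesis .
qed

lemma card_internal_of_type:
  assumes "has_type F r" and "\<forall>i>N. r i = 0"
  shows "card (internal F) = n_internal r N"
proof -
  have "card (internal F) = (\<Sum>v\<in>fverts F. if 1 \<le> fdeg F v then 1 else 0)"
    unfolding internal_def by (simp add: sum.If_cases Int_def)
  also have "\<dots> = (\<Sum>i\<le>N. r i * (if 1 \<le> i then 1 else 0))"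
    using sum_fverts_of_type[OF assms, of "\<lambda>i. if 1 \<le> i then 1 else 0 :: nat"] by simp
  also have "\<dots> = n_internal r N"
    unfolding n_internal_def atMost_atLeast0 by (simp add: sum.atLeast_Suc_atMost)
  finally show ?thesis .
qed

lemma has_type_leaves_iff:
  assumes "\<forall>i\<ge>1. r i = 0"
  shows "has_type F r \<longleftrightarrow> F = replicate (r 0) (Node [])"
proof
  assume F: "has_type F r"
  have N: "\<forall>i>0. r i = 0" using assms by simp
  have "F ! j = Node []" if "j < length F" for j
  proof -
    have "[j] \<in> fverts F" using that unfolding fverts_def by simp
    then have "fdeg F [j] = 0" using has_type_deg_le[OF F N] by simp
    then show ?thesis using that unfolding fdeg_def by (cases "F ! j") simp
  qed
  moreover have "length F = r 0" using length_of_type[OF F N] by (simp add: n_trees_def)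
  ultimately show "F = replicate (r 0) (Node [])" by (simp add: list_eq_iff_nth_eq)
next
  assume F: "F = replicate (r 0) (Node [])"
  have "fverts F = (\<lambda>i. [i]) ` {..<r 0}"
  proof (intro equalityI subsetI)
    fix q assume q: "q \<in> fverts F"
    then obtain i p where "q = i # p" "i < r 0" using Nil_notin_fverts hd_fverts_less_length F
      by (cases q) fastforce+
    with q show "q \<in> (\<lambda>i. [i]) ` {..<r 0}" unfolding fverts_def F by (cases p) auto
  qed (auto simp: fverts_def F)
  moreover have "fdeg F [i] = 0" if "i < r 0" for i using that unfolding fdeg_def F by simp
  ultimately have "{v \<in> fverts F. fdeg F v = i} = (if i = 0 then (\<lambda>i. [i]) ` {..<r 0} else {})" for i
    by auto
  moreover have "card ((\<lambda>i. [i]) ` {..<r 0}) = r 0" by (simp add: card_image inj_on_def)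
  ultimately show "has_type F r" unfolding has_type_def using assms by simp
qed

lemma no_internal_if_n_internal_0:
  assumes "\<forall>i>N. r i = 0" and "n_internal r N = 0"
  shows "\<forall>i\<ge>1. r i = 0"
  using assms unfolding n_internal_def by (metis atLeastAtMost_iff not_le sum_eq_0_iff finite_atLeastAtMost)

lemma sum_fun_upd:
  "finite A \<Longrightarrow> d \<in> A \<Longrightarrow> (\<Sum>i\<in>A. g i ((r(d := x)) i)) = g d x + (\<Sum>i\<in>A - {d}. g i (r i))"
  by (simp add: sum.remove)

lemma prod_fun_upd:
  "finite A \<Longrightarrow> d \<in> A \<Longrightarrow> (\<Prod>i\<in>A. g i ((r(d := x)) i)) = g d x * (\<Prod>i\<in>A - {d}. g i (r i))"
  by (simp add: prod.remove)

lemma type_remove_vertex: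
  assumes d: "d \<in> {1..N}" and "1 \<le> r d"
  shows "n_internal (r(d := r d - 1)) N + 1 = n_internal r N"
    and "n_trees (r(d := r d - 1)) N = n_trees r N + int d - 1"
    and "fact_prod r N = r d * fact_prod (r(d := r d - 1)) N"
    and "deg_prod r N = d * deg_prod (r(d := r d - 1)) N"
proof -
  let ?r = "r(d := r d - 1)"
  obtain c where c: "r d = Suc c" using \<open>1 \<le> r d\<close> by (cases "r d") auto
  have "d \<noteq> 0" using d by simp
  show "n_internal ?r N + 1 = n_internal r N"
    using sum_fun_upd[OF _ d, of "\<lambda>_ y. y" r "r d - 1"] sum.remove[OF _ d, of r] c
    unfolding n_internal_def by simp
  show "n_trees ?r N = n_trees r N + int d - 1"
    using sum_fun_upd[OF _ d, of "\<lambda>i y. (int i - 1) * int y" r "r d - 1"] c \<open>d \<noteq> 0\<close>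
      sum.remove[OF _ d, of "\<lambda>i. (int i - 1) * int (r i)"]
    unfolding n_trees_def by (simp add: algebra_simps)
  show "fact_prod r N = r d * fact_prod ?r N"
    using prod_fun_upd[OF _ d, of "\<lambda>_ y. fact y :: nat" r "r d - 1"]
      prod.remove[OF _ d, of "\<lambda>i. fact (r i) :: nat"] c
    unfolding fact_prod_def by (simp add: algebra_simps)
  show "deg_prod r N = d * deg_prod ?r N"
    using prod_fun_upd[OF _ d, of "\<lambda>i y. i ^ y" r "r d - 1"] prod.remove[OF _ d, of "\<lambda>i. i ^ r i"] c
    unfolding deg_prod_def by (simp add: algebra_simps)
qed

lemma length_of_type_remove_vertex:
  assumes "\<forall>i>N. r i = 0" "d \<in> {1..N}" "1 \<le> r d" and "has_type G (r(d := r d - 1))"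
  shows "int (length G) = n_trees r N + int d - 1"
  using length_of_type[OF assms(4), of N] assms(1) type_remove_vertex(2)[where r = r, OF assms(2,3)] by simp

section \<open>Labellings and colorings\<close>

text \<open>Labellings onto an arbitrary label set \<open>S\<close> rather than \<open>{1..n}\<close>: removing a labelled
  vertex leaves a labelling onto \<open>S\<close> minus one label.\<close>

definition labellings :: "pforest \<Rightarrow> nat set \<Rightarrow> (nat list \<Rightarrow> nat) set" where
  "labellings F S = {lab. bij_betw lab (internal F) S \<and> (\<forall>v. v \<notin> internal F \<longrightarrow> lab v = 0)}"

definition restrict0 :: "nat list set \<Rightarrow> (nat list \<Rightarrow> nat) \<Rightarrow> nat list \<Rightarrow> nat" where
  "restrict0 A f q = (if q \<in> A then f q else 0)"

definition labelled_forests :: "(nat \<Rightarrow> nat) \<Rightarrow> nat set \<Rightarrow> (pforest \<times> (nat list \<Rightarrow> nat)) set" where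
  "labelled_forests r S = Sigma {F. has_type F r} (\<lambda>F. labellings F S)"

definition weight :: "nat \<Rightarrow> pforest \<Rightarrow> (nat list \<Rightarrow> nat) \<Rightarrow> nat" where
  "weight k F lab = (\<Prod>v\<in>internal F. fdeg F v + (if proper_vertex F lab v then 0 else k))"

lemma labelling_in_labels: "lab \<in> labellings F S \<Longrightarrow> v \<in> internal F \<Longrightarrow> lab v \<in> S"
  unfolding labellings_def by (blast intro: bspec[OF bij_betwE])

lemma restrict0_in_labellings:
  "bij_betw f (internal F) S \<Longrightarrow> restrict0 (internal F) f \<in> labellings F S"
  unfolding labellings_def restrict0_def
  by (auto intro: bij_betw_cong[THEN iffD1, rotated])

lemma finite_labellings:
  assumes "finite S"
  shows "finite (labellings F S)"
proof -
  have "labellings F S \<subseteq> restrict0 (internal F) ` PiE (internal F) (\<lambda>_. S)"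
  proof
    fix lab assume lab: "lab \<in> labellings F S"
    then have "restrict lab (internal F) \<in> PiE (internal F) (\<lambda>_. S)"
      unfolding labellings_def bij_betw_def by auto
    moreover have "lab = restrict0 (internal F) (restrict lab (internal F))"
      using lab unfolding labellings_def restrict0_def by auto
    ultimately show "lab \<in> restrict0 (internal F) ` PiE (internal F) (\<lambda>_. S)" by blast
  qed
  moreover have "finite (restrict0 (internal F) ` PiE (internal F) (\<lambda>_. S))"
    using assms by (simp add: finite_PiE)
  ultimately show ?thesis by (rule finite_subset)
qed

lemma finite_labelled_forests:
  "\<forall>i>N. r i = 0 \<Longrightarrow> finite S \<Longrightarrow> finite (labelled_forests r S)"
  unfolding labelled_forests_def by (simp add: finite_forests_of_type finite_labellings)

lemma finite_allowed_colors: "finite (allowed_colors F lab k v)"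
  unfolding allowed_colors_def by auto

lemma card_allowed_colors:
  "card (allowed_colors F lab k v) = fdeg F v + (if proper_vertex F lab v then 0 else k)"
proof -
  have "allowed_colors F lab k v =
      Col ` {1..fdeg F v} \<union> (if proper_vertex F lab v then {} else Spec ` {1..k})"
    unfolding allowed_colors_def by auto
  moreover have "card (Col ` {1..fdeg F v}) = fdeg F v" "card (Spec ` {1..k}) = k"
    by (subst card_image; simp add: inj_on_def)+
  moreover have "Col ` {1..fdeg F v} \<inter> Spec ` {1..k} = {}" by auto
  ultimately show ?thesis
    by (cases "proper_vertex F lab v") (simp_all add: card_Un_disjoint)
qed

lemma bij_betw_restrict_proper_colorings:
  "bij_betw (\<lambda>col. restrict col (internal F)) {col. is_proper_coloring F lab k col}
     (PiE (internal F) (allowed_colors F lab k))"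
proof (rule bij_betwI')
  fix c c' assume c: "c \<in> {col. is_proper_coloring F lab k col}"
    and c': "c' \<in> {col. is_proper_coloring F lab k col}"
  show "(restrict c (internal F) = restrict c' (internal F)) = (c = c')"
  proof
    assume eq: "restrict c (internal F) = restrict c' (internal F)"
    show "c = c'"
    proof
      fix v show "c v = c' v"
        using c c' fun_cong[OF eq, of v] unfolding is_proper_coloring_def
        by (cases "v \<in> internal F") auto
    qed
  qed simp
next
  fix c assume "c \<in> {col. is_proper_coloring F lab k col}"
  then show "restrict c (internal F) \<in> PiE (internal F) (allowed_colors F lab k)"
    unfolding is_proper_coloring_def by auto
next
  fix f assume f: "f \<in> PiE (internal F) (allowed_colors F lab k)"
  let ?c = "\<lambda>v. if v \<in> internal F then f v else Col 0"
  have "?c \<in> {col. is_proper_coloring F lab k col}"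
    using f unfolding is_proper_coloring_def by auto
  moreover have "f = restrict ?c (internal F)"
    using f by (auto simp: PiE_def extensional_def)
  ultimately show "\<exists>c\<in>{col. is_proper_coloring F lab k col}. f = restrict c (internal F)" by blast
qed

lemma finite_proper_colorings: "finite {col. is_proper_coloring F lab k col}"
  using bij_betw_finite[OF bij_betw_restrict_proper_colorings]
  by (simp add: finite_PiE finite_allowed_colors)

lemma card_proper_colorings: "card {col. is_proper_coloring F lab k col} = weight k F lab"
  using bij_betw_same_card[OF bij_betw_restrict_proper_colorings]
  by (simp add: card_PiE finite_allowed_colors card_allowed_colors weight_def)

definition forest_iso :: "pforest \<Rightarrow> pforest \<Rightarrow> (nat list \<Rightarrow> nat list) \<Rightarrow> (nat list \<Rightarrow> nat list) \<Rightarrow> bool"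
  where "forest_iso F G \<pi> \<pi>' \<longleftrightarrow>
    (\<forall>q. q \<noteq> [] \<longrightarrow> \<pi>' (\<pi> q) = q \<and> \<pi> (\<pi>' q) = q \<and> \<pi> q \<noteq> [] \<and> \<pi>' q \<noteq> [] \<and>
       subtree (Node F) (\<pi> q) = subtree (Node G) q) \<and>
    (\<forall>v w. v \<noteq> [] \<longrightarrow> w \<noteq> [] \<longrightarrow> descendant (\<pi> w) (\<pi> v) = descendant w v)"

lemma forest_isoD:
  assumes "forest_iso F G \<pi> \<pi>'" "q \<noteq> []"
  shows "\<pi>' (\<pi> q) = q" "\<pi> (\<pi>' q) = q" "\<pi> q \<noteq> []" "\<pi>' q \<noteq> []"
    "subtree (Node F) (\<pi> q) = subtree (Node G) q"
  using assms unfolding forest_iso_def by blast+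

lemma forest_iso_descendant:
  "forest_iso F G \<pi> \<pi>' \<Longrightarrow> v \<noteq> [] \<Longrightarrow> w \<noteq> [] \<Longrightarrow> descendant (\<pi> w) (\<pi> v) = descendant w v"
  unfolding forest_iso_def by blast

lemma forest_iso_sym:
  assumes iso: "forest_iso F G \<pi> \<pi>'"
  shows "forest_iso G F \<pi>' \<pi>"
  unfolding forest_iso_def
proof (intro conjI allI impI)
  fix q :: "nat list" assume q: "q \<noteq> []"
  show "\<pi> (\<pi>' q) = q" "\<pi>' (\<pi> q) = q" "\<pi>' q \<noteq> []" "\<pi> q \<noteq> []"
    using forest_isoD[OF iso q] by auto
  show "subtree (Node G) (\<pi>' q) = subtree (Node F) q"
    using forest_isoD(5)[OF iso forest_isoD(4)[OF iso q]] forest_isoD(2)[OF iso q] by simp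
next
  fix v w :: "nat list" assume "v \<noteq> []" "w \<noteq> []"
  then show "descendant (\<pi>' w) (\<pi>' v) = descendant w v"
    using forest_iso_descendant[OF iso, of "\<pi>' v" "\<pi>' w"] forest_isoD(2,4)[OF iso] by simp
qed

lemma fverts_forest_iso:
  assumes iso: "forest_iso F G \<pi> \<pi>'"
  shows "fverts F = \<pi> ` fverts G"
proof (intro equalityI subsetI)
  fix q assume q: "q \<in> fverts F"
  then have ne: "q \<noteq> []" by (rule Nil_notin_fverts)
  have "subtree (Node F) (\<pi> (\<pi>' q)) = subtree (Node G) (\<pi>' q)"
    using forest_isoD(5)[OF iso forest_isoD(4)[OF iso ne]] .
  then have "\<pi>' q \<in> fverts G"
    using q forest_isoD(2,4)[OF iso ne] unfolding fverts_def by simp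
  then show "q \<in> \<pi> ` fverts G" using forest_isoD(2)[OF iso ne] by (metis image_eqI)
qed (use forest_isoD[OF iso] in \<open>auto simp: fverts_def\<close>)

lemma fdeg_forest_iso: "forest_iso F G \<pi> \<pi>' \<Longrightarrow> q \<noteq> [] \<Longrightarrow> fdeg F (\<pi> q) = fdeg G q"
  unfolding fdeg_def using forest_isoD(5) by simp

lemma inj_on_forest_iso: "forest_iso F G \<pi> \<pi>' \<Longrightarrow> inj_on \<pi> (fverts G)"
  by (rule inj_onI) (metis forest_isoD(1) Nil_notin_fverts)

lemma deg_class_forest_iso:
  assumes iso: "forest_iso F G \<pi> \<pi>'"
  shows "{v \<in> fverts F. P (fdeg F v)} = \<pi> ` {v \<in> fverts G. P (fdeg G v)}"
  unfolding fverts_forest_iso[OF iso]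
  using fdeg_forest_iso[OF iso] Nil_notin_fverts by force

lemma internal_forest_iso: "forest_iso F G \<pi> \<pi>' \<Longrightarrow> internal F = \<pi> ` internal G"
  unfolding internal_def by (rule deg_class_forest_iso)

lemma has_type_forest_iso:
  assumes iso: "forest_iso F G \<pi> \<pi>'"
  shows "has_type F r \<longleftrightarrow> has_type G r"
proof -
  have "card {v \<in> fverts F. fdeg F v = i} = card {v \<in> fverts G. fdeg G v = i}" for i
  proof -
    have "inj_on \<pi> {v \<in> fverts G. fdeg G v = i}"
      using inj_on_forest_iso[OF iso] by (rule inj_on_subset) auto
    then show ?thesis using deg_class_forest_iso[OF iso, of "\<lambda>d. d = i"] by (simp add: card_image)
  qed
  then show ?thesis unfolding has_type_def by simp
qed

lemma proper_vertex_forest_iso: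
  assumes iso: "forest_iso F G \<pi> \<pi>'" and v: "v \<in> internal G"
  shows "proper_vertex G (restrict0 (internal G) (lab \<circ> \<pi>)) v \<longleftrightarrow> proper_vertex F lab (\<pi> v)"
proof -
  have "\<forall>w\<in>internal G. descendant (\<pi> w) (\<pi> v) = descendant w v"
    using forest_iso_descendant[OF iso] v Nil_notin_internal by blast
  then show ?thesis
    using v unfolding proper_vertex_def internal_forest_iso[OF iso] restrict0_def by auto
qed

lemma labelled_forest_iso:
  assumes iso: "forest_iso F G \<pi> \<pi>'" and x: "(F, lab) \<in> labelled_forests r S"
  defines "lab' \<equiv> restrict0 (internal G) (lab \<circ> \<pi>)"
  shows "(G, lab') \<in> labelled_forests r S"
    and "weight k G lab' = weight k F lab"
    and "(\<exists>v\<in>internal G. lab' v = m \<and> P v) \<longleftrightarrow> (\<exists>v\<in>internal F. lab v = m \<and> P (\<pi>' v))"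
    and "restrict0 (internal F) (lab' \<circ> \<pi>') = lab"
proof -
  have lab: "lab \<in> labellings F S" and F: "has_type F r"
    using x unfolding labelled_forests_def by auto
  have inj: "inj_on \<pi> (internal G)"
    using inj_on_forest_iso[OF iso] internal_subset_fverts by (rule inj_on_subset)
  have "bij_betw \<pi> (internal G) (internal F)"
    using inj internal_forest_iso[OF iso] by (simp add: bij_betw_def)
  then have "bij_betw (lab \<circ> \<pi>) (internal G) S"
    using lab unfolding labellings_def by (blast intro: bij_betw_trans)
  then show "(G, lab') \<in> labelled_forests r S"
    using F has_type_forest_iso[OF iso] restrict0_in_labellings
    unfolding labelled_forests_def lab'_def by auto
  have "weight k F lab
      = (\<Prod>v\<in>internal G. fdeg F (\<pi> v) + (if proper_vertex F lab (\<pi> v) then 0 else k))"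
    unfolding weight_def internal_forest_iso[OF iso] using inj by (simp add: prod.reindex)
  also have "\<dots> = weight k G lab'"
    unfolding weight_def lab'_def using fdeg_forest_iso[OF iso] proper_vertex_forest_iso[OF iso]
    by (intro prod.cong) (auto dest: Nil_notin_internal)
  finally show "weight k G lab' = weight k F lab" by simp
  show "(\<exists>v\<in>internal G. lab' v = m \<and> P v) \<longleftrightarrow> (\<exists>v\<in>internal F. lab v = m \<and> P (\<pi>' v))"
    unfolding lab'_def restrict0_def internal_forest_iso[OF iso]
    using forest_isoD(1)[OF iso] Nil_notin_internal by auto
  show "restrict0 (internal F) (lab' \<circ> \<pi>') = lab"
  proof
    fix q show "restrict0 (internal F) (lab' \<circ> \<pi>') q = lab q"
      using lab forest_isoD[OF iso] Nil_notin_internal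
      unfolding lab'_def restrict0_def labellings_def internal_forest_iso[OF iso] by auto
  qed
qed

section \<open>The tree containing the smallest label\<close>

fun rotate_path :: "nat \<Rightarrow> nat list \<Rightarrow> nat list" where
  "rotate_path l [] = []"
| "rotate_path l (i # p) = (if Suc i < l then Suc i else if i < l then 0 else i) # p"

fun unrotate_path :: "nat \<Rightarrow> nat list \<Rightarrow> nat list" where
  "unrotate_path l [] = []"
| "unrotate_path l (i # p) = (if i = 0 \<and> 0 < l then l - 1 else if i < l then i - 1 else i) # p"

lemma forest_iso_rotate1:
  assumes "F \<noteq> []"
  shows "forest_iso F (rotate1 F) (rotate_path (length F)) (unrotate_path (length F))"
proof -
  obtain x xs where F: "F = x # xs" using assms by (cases F) auto
  show ?thesis unfolding forest_iso_def
  proof (intro conjI allI impI)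
    fix q :: "nat list" assume "q \<noteq> []"
    then obtain i p where q: "q = i # p" by (cases q) auto
    show "unrotate_path (length F) (rotate_path (length F) q) = q"
      "rotate_path (length F) (unrotate_path (length F) q) = q"
      "rotate_path (length F) q \<noteq> []" "unrotate_path (length F) q \<noteq> []"
      by (auto simp: q)
    show "subtree (Node F) (rotate_path (length F) q) = subtree (Node (rotate1 F)) q"
      by (cases "i < length xs") (auto simp: q F nth_append)
  next
    fix v w :: "nat list" assume "v \<noteq> []" "w \<noteq> []"
    then show "descendant (rotate_path (length F) w) (rotate_path (length F) v) = descendant w v"
      by (cases v; cases w) (auto simp: descendant_Cons_Cons)
  qed
qed

lemma hd_rotate_path: "v \<noteq> [] \<Longrightarrow> Suc j < l \<Longrightarrow> hd (rotate_path l v) = Suc j \<longleftrightarrow> hd v = j"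
  by (cases v) auto

lemma hd_unrotate_path: "v \<noteq> [] \<Longrightarrow> Suc j < l \<Longrightarrow> hd (unrotate_path l v) = j \<longleftrightarrow> hd v = Suc j"
  by (cases v) auto

definition label_in_trees :: "pforest \<Rightarrow> (nat list \<Rightarrow> nat) \<Rightarrow> nat \<Rightarrow> nat set \<Rightarrow> bool" where
  "label_in_trees F lab m J \<longleftrightarrow> (\<exists>v\<in>internal F. lab v = m \<and> hd v \<in> J)"

definition total_weight :: "nat \<Rightarrow> (nat \<Rightarrow> nat) \<Rightarrow> nat set \<Rightarrow> nat" where
  "total_weight k r S = (\<Sum>x\<in>labelled_forests r S. weight k (fst x) (snd x))"

definition min_label_weight :: "nat \<Rightarrow> (nat \<Rightarrow> nat) \<Rightarrow> nat set \<Rightarrow> nat set \<Rightarrow> nat" where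
  "min_label_weight k r S J =
     (\<Sum>x | x \<in> labelled_forests r S \<and> label_in_trees (fst x) (snd x) (Min S) J. weight k (fst x) (snd x))"

lemma min_label_weight_Suc:
  assumes len: "\<forall>F. has_type F r \<longrightarrow> length F = L" and j: "Suc j < L"
  shows "min_label_weight k r S {Suc j} = min_label_weight k r S {j}"
proof -
  let ?A = "\<lambda>j. {x. x \<in> labelled_forests r S \<and> label_in_trees (fst x) (snd x) (Min S) {j}}"
  define rot where "rot x = (rotate1 (fst x),
      restrict0 (internal (rotate1 (fst x))) (snd x \<circ> rotate_path L))" for x
  define unrot where "unrot y = (last (fst y) # butlast (fst y),
      restrict0 (internal (last (fst y) # butlast (fst y))) (snd y \<circ> unrotate_path L))" for y
  have rot: "rot x \<in> ?A j \<and> unrot (rot x) = x \<and> weight k (fst (rot x)) (snd (rot x)) = weight k (fst x) (snd x)"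
    if x: "x \<in> ?A (Suc j)" for x
  proof -
    obtain F lab where xF: "x = (F, lab)" by (cases x)
    have F: "(F, lab) \<in> labelled_forests r S"
      and min: "\<exists>v\<in>internal F. lab v = Min S \<and> hd v = Suc j"
      using x unfolding xF label_in_trees_def by auto
    have "F \<noteq> []" using F len j unfolding labelled_forests_def by auto
    then have iso: "forest_iso F (rotate1 F) (rotate_path L) (unrotate_path L)"
      using forest_iso_rotate1 F len unfolding labelled_forests_def by fastforce
    define lab' where "lab' = restrict0 (internal (rotate1 F)) (lab \<circ> rotate_path L)"
    note lab' = labelled_forest_iso[OF iso F, folded lab'_def]
    have r: "rot x = (rotate1 F, lab')" unfolding rot_def xF lab'_def by simp
    have "\<exists>v\<in>internal F. lab v = Min S \<and> hd (unrotate_path L v) \<in> {j}"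
      using min hd_unrotate_path[OF _ j] Nil_notin_internal by auto
    then have "rot x \<in> ?A j"
      using lab'(1) lab'(3)[of "Min S" "\<lambda>v. hd v \<in> {j}"] unfolding r label_in_trees_def by auto
    moreover have "last (rotate1 F) # butlast (rotate1 F) = F"
      using \<open>F \<noteq> []\<close> by (cases F) auto
    then have "unrot (rot x) = x" using lab'(4) xF unfolding r unrot_def by simp
    ultimately show ?thesis using lab'(2) xF unfolding r by simp
  qed
  have unrot: "unrot y \<in> ?A (Suc j) \<and> rot (unrot y) = y" if y: "y \<in> ?A j" for y
  proof -
    obtain G lab where yG: "y = (G, lab)" by (cases y)
    have G: "(G, lab) \<in> labelled_forests r S"
      and min: "\<exists>v\<in>internal G. lab v = Min S \<and> hd v = j"
      using y unfolding yG label_in_trees_def by auto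
    have "G \<noteq> []" using G len j unfolding labelled_forests_def by auto
    define F where "F = last G # butlast G"
    have G_rot: "rotate1 F = G" and "length F = L"
      using \<open>G \<noteq> []\<close> G len unfolding F_def labelled_forests_def by auto
    then have iso: "forest_iso G F (unrotate_path L) (rotate_path L)"
      using forest_iso_rotate1[of F] by (auto simp: F_def intro: forest_iso_sym)
    define lab' where "lab' = restrict0 (internal F) (lab \<circ> unrotate_path L)"
    note lab' = labelled_forest_iso[OF iso G, folded lab'_def]
    have u: "unrot y = (F, lab')" unfolding unrot_def yG F_def lab'_def by simp
    have "\<exists>v\<in>internal G. lab v = Min S \<and> hd (rotate_path L v) \<in> {Suc j}"
      using min hd_rotate_path[OF _ j] Nil_notin_internal by auto
    then have "unrot y \<in> ?A (Suc j)"
      using lab'(1) lab'(3)[of "Min S" "\<lambda>v. hd v \<in> {Suc j}"] unfolding u label_in_trees_def by auto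
    moreover have "rot (unrot y) = y" using lab'(4) yG G_rot unfolding u rot_def by simp
    ultimately show ?thesis ..
  qed
  show ?thesis
    unfolding min_label_weight_def
    by (rule sum.reindex_bij_witness[where i = unrot and j = rot]) (use rot unrot in blast)+
qed

lemma min_label_weight_eq_0:
  assumes "\<forall>F. has_type F r \<longrightarrow> length F = L" and "j < L"
  shows "min_label_weight k r S {j} = min_label_weight k r S {0}"
  using assms(2) by (induction j) (simp_all add: min_label_weight_Suc[OF assms(1)])

lemma min_label_weight_UN:
  assumes "\<forall>i>N. r i = 0" and "finite S" and "finite J"
  shows "min_label_weight k r S J = (\<Sum>j\<in>J. min_label_weight k r S {j})"
proof -
  let ?A = "\<lambda>J. {x. x \<in> labelled_forests r S \<and> label_in_trees (fst x) (snd x) (Min S) J}"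
    and ?w = "\<lambda>x. weight k (fst x) (snd x)"
  have eq: "?A J = (\<Union>j\<in>J. ?A {j})" unfolding label_in_trees_def by blast
  have disj: "?A {i} \<inter> ?A {j} = {}" if "i \<noteq> j" for i j
  proof -
    have False if x: "x \<in> ?A {i}" "x \<in> ?A {j}" for x
    proof -
      have "inj_on (snd x) (internal (fst x))"
        using x unfolding labelled_forests_def labellings_def bij_betw_def by auto
      moreover obtain v w where "v \<in> internal (fst x)" "snd x v = Min S" "hd v = i"
        "w \<in> internal (fst x)" "snd x w = Min S" "hd w = j"
        using x unfolding label_in_trees_def by auto
      ultimately show False using \<open>i \<noteq> j\<close> by (metis inj_onD)
    qed
    then show ?thesis by blast
  qed
  have fin: "finite (?A {j})" for j
    using finite_labelled_forests[OF assms(1,2)] by simp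
  have "min_label_weight k r S J = sum ?w (\<Union>j\<in>J. ?A {j})"
    unfolding min_label_weight_def eq ..
  also have "\<dots> = (\<Sum>j\<in>J. sum ?w (?A {j}))"
    by (rule sum.UNION_disjoint[OF assms(3)]) (intro ballI fin, intro ballI impI disj)
  finally show ?thesis unfolding min_label_weight_def .
qed

lemma min_label_weight_lessThan:
  assumes "\<forall>i>N. r i = 0" and "finite S" and "\<forall>F. has_type F r \<longrightarrow> length F = L" and "d \<le> L"
  shows "min_label_weight k r S {..<d} = d * min_label_weight k r S {0}"
proof -
  have "min_label_weight k r S {..<d} = (\<Sum>j<d. min_label_weight k r S {j})"
    by (rule min_label_weight_UN[OF assms(1,2)]) simp
  also have "\<dots> = (\<Sum>j<d. min_label_weight k r S {0})"
    using assms(4) by (intro sum.cong refl min_label_weight_eq_0[OF assms(3)]) auto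
  finally show ?thesis by simp
qed

lemma total_weight_eq_min_label_weight:
  assumes "\<forall>i>N. r i = 0" and "finite S" "S \<noteq> {}" and len: "\<forall>F. has_type F r \<longrightarrow> length F = L"
  shows "total_weight k r S = L * min_label_weight k r S {0}"
proof -
  have "label_in_trees F lab (Min S) {..<L}" if "(F, lab) \<in> labelled_forests r S" for F lab
  proof -
    have "length F = L"
      using that len unfolding labelled_forests_def by simp
    have b: "bij_betw lab (internal F) S"
      using that unfolding labelled_forests_def labellings_def by simp
    then have "lab ` internal F = S" by (rule bij_betw_imp_surj_on)
    then have "Min S \<in> lab ` internal F" using Min_in[OF assms(2,3)] by (simp only:)
    then obtain v where "v \<in> internal F" "lab v = Min S" by auto
    moreover have "hd v < L"
      using hd_fverts_less_length internal_subset_fverts \<open>v \<in> internal F\<close> \<open>length F = L\<close>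
      by (meson subsetD)
    ultimately show ?thesis unfolding label_in_trees_def by auto
  qed
  then have "total_weight k r S = min_label_weight k r S {..<L}"
    unfolding total_weight_def min_label_weight_def by (intro sum.cong) auto
  also have "\<dots> = L * min_label_weight k r S {0}"
    using min_label_weight_lessThan[OF assms(1,2) len] by simp
  finally show ?thesis .
qed

lemma total_weight_leaves:
  assumes "\<forall>i\<ge>1. r i = 0"
  shows "total_weight k r {} = 1"
proof -
  let ?F = "replicate (r 0) (Node [])"
  have "internal ?F = {}"
    using card_internal_of_type[OF has_type_leaves_iff[OF assms, THEN iffD2], where N = 0]
    using assms by (simp add: n_internal_def)
  then have "labellings ?F {} = {\<lambda>_. 0}" unfolding labellings_def by (auto simp: bij_betw_def)
  then have "labelled_forests r {} = {(?F, \<lambda>_. 0)}"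
    unfolding labelled_forests_def has_type_leaves_iff[OF assms] by auto
  then show ?thesis unfolding total_weight_def weight_def using \<open>internal ?F = {}\<close> by simp
qed

section \<open>Removing the root of the first tree\<close>

definition join_labelling :: "nat \<Rightarrow> nat list set \<Rightarrow> nat \<Rightarrow> (nat list \<Rightarrow> nat) \<Rightarrow> nat list \<Rightarrow> nat" where
  "join_labelling d I a lab = restrict0 I (\<lambda>q. if q = [0] then a else lab (split_path d q))"

lemma join_labelling_join_path:
  assumes "ts \<noteq> []" and "w \<in> internal (ts @ F')"
  shows "join_labelling (length ts) (internal (Node ts # F')) a lab (join_path (length ts) w) = lab w"
  using assms Nil_notin_internal[OF assms(2)]
  by (simp add: join_labelling_def restrict0_def internal_join split_join_path join_path_neq_root)

lemma join_labelling_root: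
  "ts \<noteq> [] \<Longrightarrow> join_labelling (length ts) (internal (Node ts # F')) a lab [0] = a"
  by (simp add: join_labelling_def restrict0_def internal_join)

lemma bij_betw_join_path:
  "bij_betw (join_path d) (internal F) (join_path d ` internal F)"
  using inj_on_join_path internal_subset_fverts by (blast intro: bij_betw_imageI inj_on_subset)

lemma labellings_split:
  assumes ts: "ts \<noteq> []" and lab: "lab \<in> labellings (Node ts # F') S"
  shows "restrict0 (internal (ts @ F')) (lab \<circ> join_path (length ts))
           \<in> labellings (ts @ F') (S - {lab [0]})"
proof -
  let ?X = "join_path (length ts) ` internal (ts @ F')"
  have b: "bij_betw lab (insert [0] ?X) S"
    using lab internal_join[OF ts] unfolding labellings_def by simp
  then have "lab [0] \<in> S" by (meson bij_betwE insertI1)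
  with b have "bij_betw lab (?X \<union> {[0]}) ((S - {lab [0]}) \<union> {lab [0]})"
    by (simp add: insert_absorb)
  then have "bij_betw lab ?X (S - {lab [0]})"
    using notIn_Un_bij_betw3[OF root_notin_join_path_image, of lab "S - {lab [0]}"] by simp
  then show ?thesis
    using bij_betw_join_path by (blast intro: restrict0_in_labellings bij_betw_trans)
qed

lemma labellings_join:
  assumes ts: "ts \<noteq> []" and lab: "lab \<in> labellings (ts @ F') (S - {a})" and a: "a \<in> S"
  shows "join_labelling (length ts) (internal (Node ts # F')) a lab \<in> labellings (Node ts # F') S"
proof -
  let ?X = "join_path (length ts) ` internal (ts @ F')"
    and ?lab = "join_labelling (length ts) (internal (Node ts # F')) a lab"
  have "bij_betw (?lab \<circ> join_path (length ts)) (internal (ts @ F')) (S - {a})"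
    using lab unfolding labellings_def
    by (auto intro: bij_betw_cong[THEN iffD1, rotated] simp: join_labelling_join_path[OF ts])
  then have "bij_betw ?lab ?X (S - {a})"
    using bij_betw_comp_iff[OF bij_betw_join_path] by blast
  then have "bij_betw ?lab (?X \<union> {[0]}) ((S - {a}) \<union> {a})"
    using notIn_Un_bij_betw3[OF root_notin_join_path_image, of ?lab "S - {a}"]
    by (simp add: join_labelling_root[OF ts])
  then show ?thesis
    using a internal_join[OF ts]
    unfolding labellings_def by (simp add: insert_absorb join_labelling_def restrict0_def)
qed

lemma proper_vertex_join_path:
  assumes ts: "ts \<noteq> []" and rel: "\<forall>w\<in>internal (ts @ F'). lab (join_path (length ts) w) = lab' w"
    and v: "v \<in> internal (ts @ F')"
  shows "proper_vertex (Node ts # F') lab (join_path (length ts) v) \<longleftrightarrow> proper_vertex (ts @ F') lab' v"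
proof -
  have "v \<noteq> []" using v by (rule Nil_notin_internal)
  then have "\<forall>w\<in>internal (ts @ F'). descendant (join_path (length ts) w) (join_path (length ts) v)
      \<longleftrightarrow> descendant w v"
    using descendant_join_path Nil_notin_internal by blast
  then show ?thesis
    using rel v root_not_descendant_join_path[OF \<open>v \<noteq> []\<close>]
    unfolding proper_vertex_def internal_join[OF ts] by auto
qed

lemma weight_join:
  assumes ts: "ts \<noteq> []" and rel: "\<forall>w\<in>internal (ts @ F'). lab (join_path (length ts) w) = lab' w"
  shows "weight k (Node ts # F') lab =
     (length ts + (if proper_vertex (Node ts # F') lab [0] then 0 else k)) * weight k (ts @ F') lab'"
proof -
  let ?F = "Node ts # F'" and ?j = "join_path (length ts)"
  let ?h = "\<lambda>v. fdeg ?F v + (if proper_vertex ?F lab v then 0 else k)"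
  have inj: "inj_on ?j (internal (ts @ F'))"
    using inj_on_join_path internal_subset_fverts by (rule inj_on_subset)
  have "weight k ?F lab = ?h [0] * (\<Prod>v\<in>internal (ts @ F'). ?h (?j v))"
    unfolding weight_def internal_join[OF ts]
    by (simp add: root_notin_join_path_image prod.reindex[OF inj])
  also have "(\<Prod>v\<in>internal (ts @ F'). ?h (?j v)) = weight k (ts @ F') lab'"
    unfolding weight_def using fdeg_join_path proper_vertex_join_path[OF ts rel]
    by (intro prod.cong) (auto dest: Nil_notin_internal)
  finally show ?thesis by (simp add: fdeg_join_root)
qed

lemma first_tree_internal:
  assumes "label_in_trees F lab m {0}"
  obtains ts F' where "F = Node ts # F'" "ts \<noteq> []"
proof -
  obtain v where v: "v \<in> internal F" "hd v = 0"
    using assms unfolding label_in_trees_def by auto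
  then obtain p where vp: "v = 0 # p" using Nil_notin_internal by (cases v) auto
  obtain ts F' where F: "F = Node ts # F'"
    using v(1) hd_fverts_less_length internal_subset_fverts vp
    by (metis ptree.exhaust list.exhaust list.sel(1) in_mono less_nat_zero_code list.size(3))
  have "ts \<noteq> []"
  proof
    assume "ts = []"
    have "subtree (Node F) v \<noteq> None"
      using v(1) internal_subset_fverts unfolding fverts_def by blast
    with \<open>ts = []\<close> have "v = [0]" using vp F by (cases p) auto
    then show False using v(1) \<open>ts = []\<close> F unfolding internal_def fdeg_def by simp
  qed
  with F that show ?thesis by blast
qed

lemma proper_root_iff_min:
  assumes lab: "lab \<in> labellings F S" and "finite S" and min: "label_in_trees F lab (Min S) {0}"
    and root: "[0] \<in> internal F"
  shows "proper_vertex F lab [0] \<longleftrightarrow> lab [0] = Min S"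
proof
  assume proper: "proper_vertex F lab [0]"
  obtain v where v: "v \<in> internal F" "lab v = Min S" "hd v = 0"
    using min unfolding label_in_trees_def by auto
  then have "descendant v [0]"
    using Nil_notin_internal unfolding descendant_def by (cases v) auto
  then have "\<not> Min S < lab [0]" using proper v unfolding proper_vertex_def by auto
  moreover have "lab [0] \<in> S" using labelling_in_labels[OF lab root] .
  then have "Min S \<le> lab [0]" using \<open>finite S\<close> by simp
  ultimately show "lab [0] = Min S" by simp
next
  assume "lab [0] = Min S"
  moreover have "lab ` internal F \<subseteq> S" using lab unfolding labellings_def bij_betw_def by simp
  ultimately show "proper_vertex F lab [0]"
    using \<open>finite S\<close> unfolding proper_vertex_def by (auto simp: not_less)
qed

text \<open>Deleting the first root is a bijection from \<open>first_root_class r S d a\<close> onto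
  \<open>root_removed_class r S d a\<close>: if \<open>a \<noteq> Min S\<close>, the smallest label lies in one of the \<open>d\<close>
  subtrees of the deleted root.\<close>

definition first_root_class ::
    "(nat \<Rightarrow> nat) \<Rightarrow> nat set \<Rightarrow> nat \<Rightarrow> nat \<Rightarrow> (pforest \<times> (nat list \<Rightarrow> nat)) set" where
  "first_root_class r S d a = {x \<in> labelled_forests r S.
     label_in_trees (fst x) (snd x) (Min S) {0} \<and> fdeg (fst x) [0] = d \<and> snd x [0] = a}"

definition root_removed_class ::
    "(nat \<Rightarrow> nat) \<Rightarrow> nat set \<Rightarrow> nat \<Rightarrow> nat \<Rightarrow> (pforest \<times> (nat list \<Rightarrow> nat)) set" where
  "root_removed_class r S d a = {y \<in> labelled_forests (r(d := r d - 1)) (S - {a}).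
     a \<noteq> Min S \<longrightarrow> label_in_trees (fst y) (snd y) (Min S) {..<d}}"

definition split_root :: "nat \<Rightarrow> pforest \<times> (nat list \<Rightarrow> nat) \<Rightarrow> pforest \<times> (nat list \<Rightarrow> nat)" where
  "split_root d x = (let G = children (hd (fst x)) @ tl (fst x)
     in (G, restrict0 (internal G) (snd x \<circ> join_path d)))"

definition join_root :: "nat \<Rightarrow> nat \<Rightarrow> pforest \<times> (nat list \<Rightarrow> nat) \<Rightarrow> pforest \<times> (nat list \<Rightarrow> nat)" where
  "join_root d a y = (let F = Node (take d (fst y)) # drop d (fst y)
     in (F, join_labelling d (internal F) a (snd y)))"

lemma split_root_first_root_class:
  assumes x: "x \<in> first_root_class r S d a" and S: "finite S"
  shows "split_root d x \<in> root_removed_class r S d a"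
    and "join_root d a (split_root d x) = x"
    and "weight k (fst x) (snd x) =
           (d + (if a = Min S then 0 else k)) * weight k (fst (split_root d x)) (snd (split_root d x))"
proof -
  obtain F lab where xF: "x = (F, lab)" by (cases x)
  have F: "has_type F r" and lab: "lab \<in> labellings F S" and min: "label_in_trees F lab (Min S) {0}"
    and deg: "fdeg F [0] = d" and a: "lab [0] = a"
    using x unfolding xF first_root_class_def labelled_forests_def by auto
  obtain ts F' where F_eq: "F = Node ts # F'" and ts: "ts \<noteq> []"
    using first_tree_internal[OF min] .
  have d: "length ts = d" using deg F_eq fdeg_join_root by simp
  let ?G = "ts @ F'"
  define lab' where "lab' = restrict0 (internal ?G) (lab \<circ> join_path d)"
  have split: "split_root d x = (?G, lab')" unfolding split_root_def xF F_eq lab'_def Let_def by simp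
  have rel: "\<forall>w\<in>internal ?G. lab (join_path (length ts) w) = lab' w"
    using d by (simp add: lab'_def restrict0_def)
  have internal_F: "internal F = insert [0] (join_path d ` internal ?G)"
    using internal_join[OF ts] F_eq d by simp
  have "has_type ?G (r(d := r d - 1))" using F F_eq d has_type_join by blast
  moreover have "lab' \<in> labellings ?G (S - {a})"
    using labellings_split[OF ts, of lab F' S] lab F_eq d a unfolding lab'_def by simp
  moreover have "label_in_trees ?G lab' (Min S) {..<d}" if a_ne: "a \<noteq> Min S"
  proof -
    obtain v where v: "v \<in> internal F" "lab v = Min S" "hd v = 0"
      using min unfolding label_in_trees_def by auto
    then obtain w where w: "w \<in> internal ?G" "v = join_path d w"
      using internal_F a a_ne by auto
    then show ?thesis
      using v hd_join_path_eq_0[OF Nil_notin_internal[OF w(1)]] rel d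
      unfolding label_in_trees_def by auto
  qed
  ultimately show "split_root d x \<in> root_removed_class r S d a"
    unfolding split root_removed_class_def labelled_forests_def by simp
  have "join_labelling d (internal F) a lab' = lab"
  proof
    fix q show "join_labelling d (internal F) a lab' q = lab q"
      using lab rel a d split_join_path join_path_neq_root Nil_notin_internal
      unfolding join_labelling_def restrict0_def labellings_def internal_F by auto
  qed
  then show "join_root d a (split_root d x) = x"
    using xF F_eq d unfolding split join_root_def Let_def by simp
  have "proper_vertex F lab [0] \<longleftrightarrow> a = Min S"
    using proper_root_iff_min[OF lab S min] internal_F a by auto
  then show "weight k (fst x) (snd x) =
      (d + (if a = Min S then 0 else k)) * weight k (fst (split_root d x)) (snd (split_root d x))"
    using weight_join[OF ts rel, of k] xF F_eq d unfolding split by simp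
qed

lemma join_root_root_removed_class:
  assumes y: "y \<in> root_removed_class r S d a" and "1 \<le> d" "1 \<le> r d" and a: "a \<in> S"
    and len: "d \<le> length (fst y)"
  shows "join_root d a y \<in> first_root_class r S d a"
    and "split_root d (join_root d a y) = y"
proof -
  obtain G lab where yG: "y = (G, lab)" by (cases y)
  have G: "has_type G (r(d := r d - 1))" and lab: "lab \<in> labellings G (S - {a})"
    and min: "a \<noteq> Min S \<longrightarrow> label_in_trees G lab (Min S) {..<d}"
    using y unfolding yG root_removed_class_def labelled_forests_def by auto
  let ?ts = "take d G" and ?F' = "drop d G"
  have d: "length ?ts = d" using len yG by simp
  have ts: "?ts \<noteq> []" using d \<open>1 \<le> d\<close> by auto
  let ?F = "Node ?ts # ?F'"
  define lab' where "lab' = join_labelling d (internal ?F) a lab"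
  have join: "join_root d a y = (?F, lab')" unfolding join_root_def yG lab'_def Let_def by simp
  have root: "lab' [0] = a" using join_labelling_root[OF ts] d unfolding lab'_def by simp
  have lab'_join: "lab' (join_path d w) = lab w" if "w \<in> internal G" for w
    using join_labelling_join_path[OF ts, where F' = "drop d G" and w = w and a = a and lab = lab]
      that d unfolding lab'_def by simp
  have "has_type ?F r" using has_type_join[of ?ts ?F' r] G \<open>1 \<le> r d\<close> d by simp
  moreover have "lab' \<in> labellings ?F S"
    using labellings_join[OF ts, where F' = "drop d G"] lab a d unfolding lab'_def by simp
  moreover have "label_in_trees ?F lab' (Min S) {0}"
  proof (cases "a = Min S")
    case True
    then show ?thesis using root internal_join[OF ts] unfolding label_in_trees_def by auto
  next
    case False
    then obtain w where w: "w \<in> internal G" "lab w = Min S" "hd w < d"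
      using min unfolding label_in_trees_def by auto
    then have "join_path d w \<in> internal ?F" and "hd (join_path d w) = 0"
      using internal_join[OF ts] d hd_join_path_eq_0[OF Nil_notin_internal[OF w(1)]] by auto
    then show ?thesis using lab'_join[OF w(1)] w(2) unfolding label_in_trees_def by auto
  qed
  moreover have "fdeg ?F [0] = d" using fdeg_join_root d by simp
  ultimately show "join_root d a y \<in> first_root_class r S d a"
    unfolding join first_root_class_def labelled_forests_def using root by simp
  have "restrict0 (internal G) (lab' \<circ> join_path d) = lab"
    using lab lab'_join unfolding restrict0_def labellings_def by auto
  then show "split_root d (join_root d a y) = y"
    using yG unfolding join split_root_def Let_def by simp
qed

lemma sum_first_root_class:
  assumes "1 \<le> d" "1 \<le> r d" "a \<in> S" "finite S"
    and len: "\<forall>G. has_type G (r(d := r d - 1)) \<longrightarrow> d \<le> length G"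
  shows "(\<Sum>x\<in>first_root_class r S d a. weight k (fst x) (snd x)) =
     (d + (if a = Min S then 0 else k)) * (\<Sum>y\<in>root_removed_class r S d a. weight k (fst y) (snd y))"
proof -
  have len': "d \<le> length (fst y)" if "y \<in> root_removed_class r S d a" for y
    using that len unfolding root_removed_class_def labelled_forests_def by auto
  note split = split_root_first_root_class[OF _ \<open>finite S\<close>]
  have join: "join_root d a y \<in> first_root_class r S d a" "split_root d (join_root d a y) = y"
    if "y \<in> root_removed_class r S d a" for y
    using join_root_root_removed_class[OF that assms(1-3) len'[OF that]] by blast+
  have "(\<Sum>x\<in>first_root_class r S d a. weight k (fst x) (snd x)) =
     (\<Sum>y\<in>root_removed_class r S d a. (d + (if a = Min S then 0 else k)) * weight k (fst y) (snd y))"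
    by (rule sum.reindex_bij_witness[where i = "join_root d a" and j = "split_root d"])
      (use split join in auto)
  then show ?thesis by (simp add: sum_distrib_left)
qed

lemma first_root_class_empty: "r d = 0 \<Longrightarrow> first_root_class r S d a = {}"
  unfolding first_root_class_def labelled_forests_def
  by (auto elim!: first_tree_internal simp: has_type_join fdeg_join_root)

lemma sum_first_root_classes:
  assumes N: "\<forall>i>N. r i = 0" and S: "finite S" "S \<noteq> {}" and L: "1 \<le> n_trees r N"
    and d: "d \<in> {1..N}" "1 \<le> r d"
  shows "(\<Sum>a\<in>S. \<Sum>x\<in>first_root_class r S d a. weight k (fst x) (snd x)) =
    d * total_weight k (r(d := r d - 1)) (S - {Min S})
    + (d + k) * d * (\<Sum>a\<in>S - {Min S}. min_label_weight k (r(d := r d - 1)) (S - {a}) {0})"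
proof -
  let ?r = "r(d := r d - 1)" and ?w = "\<lambda>x. weight k (fst x) (snd x)"
  have N': "\<forall>i>N. ?r i = 0" using N by simp
  define L' where "L' = nat (n_trees r N + int d - 1)"
  have len: "length G = L'" if "has_type G ?r" for G
    using length_of_type_remove_vertex[OF N d that] L unfolding L'_def by simp
  have "d \<le> L'" using L d unfolding L'_def by auto
  then have len_d: "\<forall>G. has_type G ?r \<longrightarrow> d \<le> length G" using len by simp
  have "1 \<le> d" using d by simp
  note sum_class = sum_first_root_class[where k = k, OF \<open>1 \<le> d\<close> d(2) _ S(1) len_d]
  have Min: "Min S \<in> S" using S by simp
  have "(\<Sum>x\<in>first_root_class r S d (Min S). ?w x) = d * total_weight k ?r (S - {Min S})"
    using sum_class[OF Min] unfolding root_removed_class_def total_weight_def by simp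
  moreover have "(\<Sum>x\<in>first_root_class r S d a. ?w x)
      = (d + k) * d * min_label_weight k ?r (S - {a}) {0}" if a: "a \<in> S - {Min S}" for a
  proof -
    have "Min (S - {a}) = Min S" using S a by (intro Min_eqI) auto
    then have "(\<Sum>y\<in>root_removed_class r S d a. ?w y) = min_label_weight k ?r (S - {a}) {..<d}"
      using a unfolding root_removed_class_def min_label_weight_def by simp
    also have "\<dots> = d * min_label_weight k ?r (S - {a}) {0}"
      by (rule min_label_weight_lessThan[OF N' _ _ \<open>d \<le> L'\<close>]) (simp add: S(1), use len in blast)
    finally show ?thesis using sum_class[of a] a by simp
  qed
  ultimately show ?thesis
    using S(1) Min by (simp add: sum.remove sum_distrib_left)
qed

lemma min_label_weight_recursion:
  assumes N: "\<forall>i>N. r i = 0" and S: "finite S" "S \<noteq> {}" and L: "1 \<le> n_trees r N"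
  shows "min_label_weight k r S {0} = (\<Sum>d=1..N. if r d = 0 then 0 else
      d * total_weight k (r(d := r d - 1)) (S - {Min S})
      + (d + k) * d * (\<Sum>a\<in>S - {Min S}. min_label_weight k (r(d := r d - 1)) (S - {a}) {0}))"
proof -
  let ?A = "{x. x \<in> labelled_forests r S \<and> label_in_trees (fst x) (snd x) (Min S) {0}}"
  let ?key = "\<lambda>x. (fdeg (fst x) [0], snd x [0])" and ?w = "\<lambda>x. weight k (fst x) (snd x)"
  have "?key x \<in> {1..N} \<times> S" if x: "x \<in> ?A" for x
  proof -
    obtain F lab where xF: "x = (F, lab)" by (cases x)
    have F: "has_type F r" and lab: "lab \<in> labellings F S" and min: "label_in_trees F lab (Min S) {0}"
      using x unfolding xF labelled_forests_def by auto
    obtain ts F' where F_eq: "F = Node ts # F'" and ts: "ts \<noteq> []"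
      using first_tree_internal[OF min] .
    have "1 \<le> r (length ts)" using F F_eq has_type_join by blast
    then have "length ts \<le> N" using N by (cases "length ts \<le> N") auto
    then have "length ts \<in> {1..N}" using ts by (cases ts) auto
    moreover have "lab [0] \<in> S"
      using labelling_in_labels[OF lab] internal_join[OF ts] F_eq by simp
    ultimately show ?thesis using xF F_eq fdeg_join_root by simp
  qed
  then have "min_label_weight k r S {0} = (\<Sum>z\<in>{1..N} \<times> S. sum ?w {x\<in>?A. ?key x = z})"
    unfolding min_label_weight_def
    using finite_labelled_forests[OF N S(1)] S(1) by (intro sum.group[symmetric]) auto
  also have "\<dots> = (\<Sum>(d, a)\<in>{1..N} \<times> S. sum ?w (first_root_class r S d a))"
  proof (rule sum.cong[OF refl], clarify)
    fix d a
    have "{x \<in> ?A. ?key x = (d, a)} = first_root_class r S d a"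
      unfolding first_root_class_def by auto
    then show "sum ?w {x \<in> ?A. ?key x = (d, a)} = sum ?w (first_root_class r S d a)" by simp
  qed
  also have "\<dots> = (\<Sum>d\<in>{1..N}. \<Sum>a\<in>S. sum ?w (first_root_class r S d a))"
    by (rule sum.cartesian_product[symmetric])
  also have "\<dots> = (\<Sum>d=1..N. if r d = 0 then 0 else
      d * total_weight k (r(d := r d - 1)) (S - {Min S})
      + (d + k) * d * (\<Sum>a\<in>S - {Min S}. min_label_weight k (r(d := r d - 1)) (S - {a}) {0}))"
    using sum_first_root_classes[OF N S L] first_root_class_empty by (intro sum.cong) auto
  finally show ?thesis .
qed

section \<open>The counting formula\<close>

lemma sum_tree_count_identity:
  assumes "n_internal r N = Suc m"
  shows "(\<Sum>d=1..N. int (r d) * (n_trees r N + int d - 1 + int m * (int d + int k)))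
    = (int m + 1) * (int (r 0) + int m * (1 + int k))"
proof -
  have n: "(\<Sum>d=1..N. int (r d)) = int m + 1"
    using assms unfolding n_internal_def by (simp flip: of_nat_sum)
  have "(\<Sum>d=1..N. int d * int (r d)) = (\<Sum>d=1..N. (int d - 1) * int (r d)) + (\<Sum>d=1..N. int (r d))"
    by (simp add: sum.distrib[symmetric] algebra_simps)
  also have "\<dots> = int (r 0) - n_trees r N + int m + 1" unfolding n n_trees_def by simp
  finally have dn: "(\<Sum>d=1..N. int d * int (r d)) = int (r 0) - n_trees r N + int m + 1" .
  have "(\<Sum>d=1..N. int (r d) * (n_trees r N + int d - 1 + int m * (int d + int k)))
      = (\<Sum>d=1..N. (n_trees r N - 1 + int m * int k) * int (r d) + (1 + int m) * (int d * int (r d)))"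
    by (intro sum.cong) (auto simp: algebra_simps)
  also have "\<dots> = (n_trees r N - 1 + int m * int k) * (\<Sum>d=1..N. int (r d))
        + (1 + int m) * (\<Sum>d=1..N. int d * int (r d))"
    by (simp add: sum.distrib sum_distrib_left)
  finally show ?thesis unfolding n dn by (simp add: algebra_simps)
qed

lemma leaf_prod_Suc: "1 \<le> m \<Longrightarrow> leaf_prod r k (Suc m) = leaf_prod r k m * (r 0 + m * (1 + k))"
  unfolding leaf_prod_def by (cases m) (simp_all add: prod.cl_ivl_Suc)

lemma fact_prod_first_root_term:
  fixes r :: "nat \<Rightarrow> nat" and d :: nat
  defines "r' \<equiv> r(d := r d - 1)"
  assumes N: "\<forall>i>N. r i = 0" and S: "finite S" "card S = Suc m"
    and n: "n_internal r N = Suc m" and L: "1 \<le> n_trees r N" and d: "d \<in> {1..N}" "1 \<le> r d"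
    and IH: "1 \<le> m \<Longrightarrow> \<forall>a\<in>S. int (fact_prod r' N) * int (min_label_weight k r' (S - {a}) {0})
                                 = int (fact m) * int (deg_prod r' N) * int (leaf_prod r k m)"
  shows "int (fact_prod r N) * int (d * total_weight k r' (S - {Min S})
           + (d + k) * d * (\<Sum>a\<in>S - {Min S}. min_label_weight k r' (S - {a}) {0}))
     = int (r d) * int (fact m) * int (deg_prod r N) * int (leaf_prod r k m)
       * (if m = 0 then 1 else n_trees r N + int d - 1 + int m * (int d + int k))"
proof -
  note r' = type_remove_vertex[where r = r, OF d, folded r'_def]
  have N': "\<forall>i>N. r' i = 0" using N unfolding r'_def by simp
  have "Min S \<in> S" using S by (intro Min_in) auto
  show ?thesis
  proof (cases "m = 0")
    case True
    have empty: "S - {Min S} = {}"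
      using S \<open>Min S \<in> S\<close> True by (metis card_1_singleton_iff Diff_cancel One_nat_def singletonD)
    have leaves: "\<forall>i\<ge>1. r' i = 0"
      using n r'(1) True no_internal_if_n_internal_0[OF N'] by simp
    then have "fact_prod r' N = 1" "deg_prod r' N = 1"
      by (simp_all add: fact_prod_def deg_prod_def)
    then show ?thesis
      using total_weight_leaves[OF leaves, of k] r'(3,4) True
      unfolding empty by (simp add: leaf_prod_def)
  next
    case False
    define U where "U a = int (min_label_weight k r' (S - {a}) {0})" for a
    define X where "X = int (fact m) * int (deg_prod r' N) * int (leaf_prod r k m)"
    have IH': "int (fact_prod r' N) * U a = X" if "a \<in> S" for a
      using IH False that unfolding U_def X_def by simp
    have len: "length G = nat (n_trees r N + int d - 1)" if "has_type G r'" for G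
      using length_of_type_remove_vertex[OF N d that[unfolded r'_def]] by simp
    have "card (S - {Min S}) = m" using S \<open>Min S \<in> S\<close> by simp
    then have "S - {Min S} \<noteq> {}" using False by (metis card.empty)
    then have "total_weight k r' (S - {Min S})
        = nat (n_trees r N + int d - 1) * min_label_weight k r' (S - {Min S}) {0}"
      by (intro total_weight_eq_min_label_weight[OF N']) (simp_all add: S(1) len)
    then have T: "int (total_weight k r' (S - {Min S})) = (n_trees r N + int d - 1) * U (Min S)"
      using L d unfolding U_def by simp
    have RT: "int (fact_prod r' N) * int (total_weight k r' (S - {Min S}))
        = (n_trees r N + int d - 1) * X"
      using T IH'[OF \<open>Min S \<in> S\<close>] by (simp add: mult_ac)
    have RU: "int (fact_prod r' N) * (\<Sum>a\<in>S - {Min S}. U a) = int m * X"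
      using IH' \<open>card (S - {Min S}) = m\<close> by (simp add: sum_distrib_left)
    have "int (fact_prod r N) * int (d * total_weight k r' (S - {Min S})
           + (d + k) * d * (\<Sum>a\<in>S - {Min S}. min_label_weight k r' (S - {a}) {0}))
        = int (r d) * int d * (int (fact_prod r' N) * int (total_weight k r' (S - {Min S}))
           + (int d + int k) * (int (fact_prod r' N) * (\<Sum>a\<in>S - {Min S}. U a)))"
      using r'(3) unfolding U_def by (simp add: of_nat_sum algebra_simps)
    also have "\<dots> = int (r d) * int d * X * (n_trees r N + int d - 1 + int m * (int d + int k))"
      unfolding RT RU by (simp add: algebra_simps)
    finally show ?thesis
      using r'(4) False unfolding X_def by (simp add: algebra_simps)
  qed
qed

lemma min_label_weight_formula:
  assumes "\<forall>i>N. r i = 0" and "finite S" and "card S = Suc m" and "n_internal r N = Suc m"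
    and "1 \<le> n_trees r N"
  shows "int (fact_prod r N) * int (min_label_weight k r S {0})
    = int (fact (Suc m)) * int (deg_prod r N) * int (leaf_prod r k (Suc m))"
  using assms
proof (induction m arbitrary: r S rule: less_induct)
  case (less m)
  note N = less.prems(1) and S = less.prems(2,3) and n = less.prems(4) and L = less.prems(5)
  define c where "c d = (if m = 0 then 1 else n_trees r N + int d - 1 + int m * (int d + int k))" for d
  define Z where "Z = int (fact m) * int (deg_prod r N) * int (leaf_prod r k m)"
  let ?t = "\<lambda>d. if r d = 0 then 0 else
      d * total_weight k (r(d := r d - 1)) (S - {Min S})
      + (d + k) * d * (\<Sum>a\<in>S - {Min S}. min_label_weight k (r(d := r d - 1)) (S - {a}) {0})"
  have summand: "int (fact_prod r N) * int (?t d) = int (r d) * Z * c d" if d: "d \<in> {1..N}" for d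
  proof (cases "r d = 0")
    case False
    let ?r = "r(d := r d - 1)"
    have "1 \<le> r d" using False by simp
    note r' = type_remove_vertex[where r = r, OF d this]
    have n': "n_internal ?r N = Suc (m - 1)" if "1 \<le> m" using r'(1) n that by simp
    have L': "1 \<le> n_trees ?r N" using r'(2) L d by simp
    have "int (fact_prod ?r N) * int (min_label_weight k ?r (S - {a}) {0})
        = int (fact m) * int (deg_prod ?r N) * int (leaf_prod r k m)" if "1 \<le> m" "a \<in> S" for a
    proof -
      have "m - 1 < m" "\<forall>i>N. ?r i = 0" "finite (S - {a})" "card (S - {a}) = Suc (m - 1)"
        using N S that by auto
      from less.IH[OF this n'[OF that(1)] L'] show ?thesis
        using that d by (simp add: leaf_prod_def fun_upd_def)
    qed
    then show ?thesis
      using fact_prod_first_root_term[OF N S n L d] False unfolding c_def Z_def by simp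
  qed (simp add: Z_def)
  have "S \<noteq> {}" using S by auto
  have "int (fact_prod r N) * int (min_label_weight k r S {0}) = (\<Sum>d=1..N. int (r d) * Z * c d)"
    using min_label_weight_recursion[OF N S(1) \<open>S \<noteq> {}\<close> L, of k] summand
    by (simp add: of_nat_sum sum_distrib_left)
  also have "\<dots> = Z * (\<Sum>d=1..N. int (r d) * c d)"
    by (simp add: sum_distrib_left mult_ac)
  also have "(\<Sum>d=1..N. int (r d) * c d)
      = (if m = 0 then 1 else (int m + 1) * (int (r 0) + int m * (1 + int k)))"
    using sum_tree_count_identity[OF n, of k] n unfolding c_def n_internal_def
    by (simp add: of_nat_sum[symmetric])
  finally have closed: "int (fact_prod r N) * int (min_label_weight k r S {0})
      = Z * (if m = 0 then 1 else (int m + 1) * (int (r 0) + int m * (1 + int k)))" .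
  show ?case
  proof (cases "m = 0")
    case True
    then show ?thesis using closed unfolding Z_def by (simp add: leaf_prod_def)
  next
    case False
    then have "leaf_prod r k (Suc m) = leaf_prod r k m * (r 0 + m * (1 + k))"
      by (simp add: leaf_prod_Suc)
    then show ?thesis using closed False unfolding Z_def by (simp add: algebra_simps)
  qed
qed

lemma card_CF:
  assumes N: "\<forall>i>N. r i = 0"
  shows "card (CF r k) = total_weight k r {1..n_internal r N}"
proof -
  let ?S = "{1..n_internal r N}"
  let ?C = "\<lambda>x. {col. is_proper_coloring (fst x) (snd x) k col}"
  have labelling: "is_labelling F lab \<longleftrightarrow> lab \<in> labellings F ?S" if "has_type F r" for F lab
    using card_internal_of_type[OF that N] unfolding is_labelling_def labellings_def by simp
  have "CF r k = (\<lambda>(x, col). (fst x, snd x, col)) ` Sigma (labelled_forests r ?S) ?C"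
    unfolding CF_def labelled_forests_def using labelling by force
  moreover have "inj_on (\<lambda>(x, col). (fst x, snd x, col)) (Sigma (labelled_forests r ?S) ?C)"
    by (auto simp: inj_on_def)
  ultimately have "card (CF r k) = card (Sigma (labelled_forests r ?S) ?C)"
    by (simp add: card_image)
  also have "\<dots> = (\<Sum>x\<in>labelled_forests r ?S. card (?C x))"
    using finite_labelled_forests[OF N] finite_proper_colorings by (intro card_SigmaI) auto
  finally show ?thesis unfolding total_weight_def card_proper_colorings .
qed

lemma prod_fact_dvd_fact_sum:
  "finite A \<Longrightarrow> (\<Prod>a\<in>A. fact (f a)) dvd (fact (\<Sum>a\<in>A. f a) :: nat)"
proof (induction A rule: finite_induct)
  case (insert x A)
  have "(\<Prod>a\<in>insert x A. fact (f a)) dvd fact (f x) * (fact (\<Sum>a\<in>A. f a) :: nat)"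
    using insert by (simp add: mult_dvd_mono)
  also have "\<dots> dvd fact (f x + (\<Sum>a\<in>A. f a))" by (rule fact_fact_dvd_fact)
  finally show ?case using insert by simp
qed simp

lemma type_statistics_support:
  assumes "\<forall>i>N. r i = 0"
  shows "(\<Sum>d\<in>{d. r d \<noteq> 0 \<and> d \<ge> 1}. r d) = n_internal r N"
    and "- (\<Sum>d\<in>{d. r d \<noteq> 0}. (int d - 1) * int (r d)) = n_trees r N"
    and "(\<Prod>d\<in>{d. r d \<noteq> 0 \<and> d \<ge> 1}. fact (r d)) = fact_prod r N"
    and "(\<Prod>d\<in>{d. r d \<noteq> 0 \<and> d \<ge> 1}. d ^ r d) = deg_prod r N"
proof -
  have D: "{d. r d \<noteq> 0 \<and> d \<ge> 1} \<subseteq> {1..N}" using assms by (auto simp: not_less[symmetric])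
  show "(\<Sum>d\<in>{d. r d \<noteq> 0 \<and> d \<ge> 1}. r d) = n_internal r N"
    unfolding n_internal_def by (rule sum.mono_neutral_left[OF _ D]) auto
  show "(\<Prod>d\<in>{d. r d \<noteq> 0 \<and> d \<ge> 1}. fact (r d)) = fact_prod r N"
    unfolding fact_prod_def by (rule prod.mono_neutral_left[OF _ D]) (auto intro: gr0I)
  show "(\<Prod>d\<in>{d. r d \<noteq> 0 \<and> d \<ge> 1}. d ^ r d) = deg_prod r N"
    unfolding deg_prod_def by (rule prod.mono_neutral_left[OF _ D]) auto
  have "{d. r d \<noteq> 0} \<subseteq> {..N}" using assms by (auto simp: not_less[symmetric])
  then have "(\<Sum>d\<in>{d. r d \<noteq> 0}. (int d - 1) * int (r d)) = (\<Sum>d\<le>N. (int d - 1) * int (r d))"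
    by (intro sum.mono_neutral_left) auto
  also have "\<dots> = - int (r 0) + (\<Sum>d=1..N. (int d - 1) * int (r d))"
    by (simp add: atMost_atLeast0 sum.atLeast_Suc_atMost)
  finally show "- (\<Sum>d\<in>{d. r d \<noteq> 0}. (int d - 1) * int (r d)) = n_trees r N"
    unfolding n_trees_def by simp
qed

theorem proposition3p3:
  fixes r :: "nat \<Rightarrow> nat" and k :: nat
  assumes fin: "finite {d. r d \<noteq> 0}"
    and n_pos: "(\<Sum>d\<in>{d. r d \<noteq> 0 \<and> d \<ge> 1}. r d) \<ge> 1"
    and l_pos: "- (\<Sum>d\<in>{d. r d \<noteq> 0}. (int d - 1) * int (r d)) \<ge> 1"
  shows "int (card (CF r k)) =
      int (multinomial (\<Sum>d\<in>{d. r d \<noteq> 0 \<and> d \<ge> 1}. r d) {d. r d \<noteq> 0 \<and> d \<ge> 1} r)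
      * (- (\<Sum>d\<in>{d. r d \<noteq> 0}. (int d - 1) * int (r d)))
      * int (\<Prod>d\<in>{d. r d \<noteq> 0 \<and> d \<ge> 1}. d ^ r d)
      * int (\<Prod>i\<in>{1..(\<Sum>d\<in>{d. r d \<noteq> 0 \<and> d \<ge> 1}. r d) - 1}. r 0 + i * (1 + k))"
proof -
  obtain N where "\<forall>d\<in>{d. r d \<noteq> 0}. d \<le> N"
    using fin finite_nat_set_iff_bounded_le by blast
  then have N: "\<forall>i>N. r i = 0" by (meson leD mem_Collect_eq)
  note stats = type_statistics_support[OF N]
  define n where "n = n_internal r N"
  have n: "1 \<le> n" and L: "1 \<le> n_trees r N" using n_pos l_pos stats unfolding n_def by simp_all
  have len: "length F = nat (n_trees r N)" if "has_type F r" for F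
    using length_of_type[OF that N] by (metis nat_int)
  have "card (CF r k) = total_weight k r {1..n}" unfolding card_CF[OF N] n_def ..
  also have "\<dots> = nat (n_trees r N) * min_label_weight k r {1..n} {0}"
    using n len by (intro total_weight_eq_min_label_weight[OF N]) simp_all
  finally have card: "card (CF r k) = nat (n_trees r N) * min_label_weight k r {1..n} {0}" .
  have formula: "int (fact_prod r N) * int (min_label_weight k r {1..n} {0})
      = int (fact n) * int (deg_prod r N) * int (leaf_prod r k n)"
  proof -
    have m: "card {1..n} = Suc (n - 1)" "n_internal r N = Suc (n - 1)" "Suc (n - 1) = n"
      using n unfolding n_def by simp_all
    show ?thesis
      using min_label_weight_formula[OF N _ m(1,2) L, of k] unfolding m(3) by simp
  qed
  have multinomial: "fact n = multinomial n {d. r d \<noteq> 0 \<and> d \<ge> 1} r * fact_prod r N"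
    using prod_fact_dvd_fact_sum[of "{d. r d \<noteq> 0 \<and> d \<ge> 1}" r] fin stats(1,3)
    unfolding multinomial_def n_def by simp
  have "fact_prod r N > 0" unfolding fact_prod_def by (simp add: prod_pos)
  then have "int (min_label_weight k r {1..n} {0})
      = int (multinomial n {d. r d \<noteq> 0 \<and> d \<ge> 1} r) * int (deg_prod r N) * int (leaf_prod r k n)"
    using formula unfolding multinomial by (simp add: algebra_simps)
  then show ?thesis
    using card L unfolding stats n_def[symmetric] leaf_prod_def[symmetric] by simp
qed

end
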